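(* Let $|q|<1$, let $n\ge 0$ be an integer, and let $t$ be a complex number with $|t|<1$ and $|xt|<1$. Then $$\mathbb{E}(D_{xy})\left\{\frac{(yt;q)_\infty}{(xt;q)_\infty}\,\frac{P_n(x,y)}{(yt;q)_n}\right\}=\frac{(yt;q)_\infty}{(t,xt;q)_\infty}\sum_{k=0}^n {n\brack k}\frac{(y,xt;q)_k}{(yt;q)_k}\,x^{n-k}.$$
   Context: Throughout $|q|<1$. $(a;q)_n=\prod_{k=0}^{n-1}(1-aq^k)$, $(a;q)_\infty=\prod_{k\ge0}(1-aq^k)$, $(a_1,\dots,a_m;q)_n=\prod_i(a_i;q)_n$ (also for $n=\infty$), and ${n\brack k}=\frac{(q;q)_n}{(q;q)_k(q;q)_{n-k}}$. $P_n(x,y)=(x-y)(x-qy)\cdots(x-q^{n-1}y)$ with $P_0=1$. The homogeneous $q$-difference operator acting on functions of $(x,y)$ is $D_{xy}f(x,y)=\frac{f(x,q^{-1}y)-f(qx,y)}{x-q^{-1}y}$, and the homogeneous $q$-shift operator is $\mathbb{E}(D_{xy})=\sum_{k=0}^\infty\frac{D_{xy}^k}{(q;q)_k}$. *)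

theory Defs
  imports "HOL-Analysis.Analysis"
begin

definition qpoch :: "complex \<Rightarrow> complex \<Rightarrow> nat \<Rightarrow> complex" where
  "qpoch a q n = (\<Prod>k<n. 1 - a * q ^ k)"

definition qpoch_inf :: "complex \<Rightarrow> complex \<Rightarrow> complex" where
  "qpoch_inf a q = (\<Prod>k. 1 - a * q ^ k)"

definition qbinom :: "complex \<Rightarrow> nat \<Rightarrow> nat \<Rightarrow> complex" where
  "qbinom q n k = qpoch q q n / (qpoch q q k * qpoch q q (n - k))"

definition Pn :: "complex \<Rightarrow> nat \<Rightarrow> complex \<Rightarrow> complex \<Rightarrow> complex" where
  "Pn q n x y = (\<Prod>k<n. x - q ^ k * y)"

definition Dxy :: "complex \<Rightarrow> (complex \<Rightarrow> complex \<Rightarrow> complex) \<Rightarrow> complex \<Rightarrow> complex \<Rightarrow> complex" where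
  "Dxy q f x y = (f x (y / q) - f (q * x) y) / (x - y / q)"

text \<open>k-th summand of the homogeneous q-shift operator E(D_xy) applied to f at (x,y).\<close>
definition Eterm :: "complex \<Rightarrow> (complex \<Rightarrow> complex \<Rightarrow> complex) \<Rightarrow> complex \<Rightarrow> complex \<Rightarrow> nat \<Rightarrow> complex" where
  "Eterm q f x y k = ((Dxy q ^^ k) f) x y / qpoch q q k"

end

theory Submission
  imports Defs
begin

(* Write F_n(t) for the function in braces and R_n(t) for the right-hand side.
   For t = 0, F_n = P_n and D_xy^k P_n = (q;q)_n / (q;q)_(n-k) P_(n-k), so the series is finite and
   the claim becomes sum_k [n,k] P_(n-k)(x,y) = sum_k [n,k] (y;q)_k x^(n-k); both sides satisfy
   f_(n+1)(x,y) = x f_n(x,y) + (1 - y) f_n(qx,qy).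
   For n = 0, F_0 is an eigenfunction of D_xy with eigenvalue t, and the claim is Euler's identity
   sum_k t^k / (q;q)_k = 1 / (t;q)_inf.
   For t <> 0, both F_n and R_n satisfy G_(n+1)(t) = (G_n(t) - G_n(qt)) / t; since D_xy is linear,
   induction on n finishes the proof. *)

lemma qpoch_0 [simp]: "qpoch a q 0 = 1"
  by (simp add: qpoch_def)

lemma qpoch_zero_base [simp]: "qpoch 0 q n = 1"
  by (simp add: qpoch_def)

lemma qpoch_Suc: "qpoch a q (Suc n) = qpoch a q n * (1 - a * q ^ n)"
  by (simp add: qpoch_def lessThan_Suc)

lemma qpoch_Suc_shift: "qpoch a q (Suc n) = (1 - a) * qpoch (a * q) q n"
  unfolding qpoch_def prod.lessThan_Suc_shift by (simp add: mult.assoc)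

lemma qpoch_nonzero_le: "qpoch a q m \<noteq> 0 \<Longrightarrow> k \<le> m \<Longrightarrow> qpoch a q k \<noteq> 0"
  by (auto simp: qpoch_def)

lemma qpoch_factor_nonzero: "qpoch a q m \<noteq> 0 \<Longrightarrow> k < m \<Longrightarrow> 1 - a * q ^ k \<noteq> 0"
  by (auto simp: qpoch_def)

lemma norm_power_mult_less_one:
  fixes q a :: complex
  assumes "norm q \<le> 1" "norm a < 1"
  shows "norm (q ^ k * a) < 1"
proof -
  have "norm (q ^ k) * norm a \<le> norm a"
    using assms by (intro mult_left_le_one_le) (auto simp: norm_power power_le_one)
  with assms(2) show ?thesis by (simp add: norm_mult)
qed

lemma one_minus_power_nonzero:
  fixes q :: complex
  assumes "norm q < 1" "k > 0"
  shows "1 - q ^ k \<noteq> 0"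
proof -
  have "norm (q ^ k) < 1"
    using assms by (simp add: norm_power power_less_one_iff)
  then show ?thesis
    by auto
qed

lemma qpoch_q_nonzero:
  fixes q :: complex
  assumes "norm q < 1"
  shows "qpoch q q k \<noteq> 0"
  using one_minus_power_nonzero[OF assms, of "Suc j" for j] by (simp add: qpoch_def)

lemma convergent_prod_qpoch:
  fixes a q :: complex
  assumes "norm q < 1"
  shows "convergent_prod (\<lambda>k. 1 - a * q ^ k)"
proof -
  have "summable (\<lambda>k. norm a * norm q ^ k)"
    using assms by (intro summable_mult summable_geometric) auto
  then show ?thesis
    by (intro abs_convergent_prod_imp_convergent_prod summable_imp_abs_convergent_prod)
       (simp add: norm_mult norm_power)
qed

lemma qpoch_LIMSEQ:
  fixes a q :: complex
  assumes "norm q < 1"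
  shows "(\<lambda>n. qpoch a q n) \<longlonglongrightarrow> qpoch_inf a q"
proof -
  have "(\<lambda>n. qpoch a q (Suc n)) \<longlonglongrightarrow> qpoch_inf a q"
    using convergent_prod_LIMSEQ[OF convergent_prod_qpoch[OF assms]]
    by (simp add: qpoch_def qpoch_inf_def lessThan_Suc_atMost)
  then show ?thesis
    by (rule filterlim_sequentially_Suc[THEN iffD1])
qed

lemma qpoch_inf_shift:
  fixes a q :: complex
  assumes "norm q < 1"
  shows "qpoch_inf a q = (1 - a) * qpoch_inf (a * q) q"
proof -
  have "(\<lambda>n. qpoch a q (Suc n)) \<longlonglongrightarrow> (1 - a) * qpoch_inf (a * q) q"
    unfolding qpoch_Suc_shift by (intro tendsto_mult tendsto_const qpoch_LIMSEQ assms)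
  moreover have "(\<lambda>n. qpoch a q (Suc n)) \<longlonglongrightarrow> qpoch_inf a q"
    using qpoch_LIMSEQ[OF assms] by (rule LIMSEQ_Suc)
  ultimately show ?thesis
    using LIMSEQ_unique by blast
qed

lemma qpoch_inf_nonzero:
  fixes a q :: complex
  assumes "norm q < 1" "norm a < 1"
  shows "qpoch_inf a q \<noteq> 0"
  unfolding qpoch_inf_def
proof (rule prodinf_nonzero[OF convergent_prod_qpoch[OF assms(1)]])
  fix k
  have "norm (q ^ k * a) < 1"
    using assms by (intro norm_power_mult_less_one) auto
  then show "1 - a * q ^ k \<noteq> 0"
    by (metis mult.commute norm_one order.irrefl right_minus_eq)
qed

lemma qpoch_inf_zero_base [simp]: "qpoch_inf 0 q = 1"
  by (simp add: qpoch_inf_def)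

definition qexp :: "complex \<Rightarrow> complex \<Rightarrow> complex" where
  "qexp q t = (\<Sum>k. t ^ k / qpoch q q k)"

lemma summable_qexp:
  fixes q t :: complex
  assumes q: "norm q < 1" and t: "norm t < 1"
  shows "summable (\<lambda>k. t ^ k / qpoch q q k)"
proof -
  have "(\<lambda>k. 1 / qpoch q q k) \<longlonglongrightarrow> 1 / qpoch_inf q q"
    using q by (intro tendsto_divide tendsto_const qpoch_LIMSEQ qpoch_inf_nonzero)
  then obtain B where B: "\<And>k. norm (1 / qpoch q q k) \<le> B"
    using BseqE convergent_imp_Bseq convergentI by metis
  show ?thesis
  proof (rule summable_comparison_test')
    show "summable (\<lambda>k. B * norm t ^ k)"
      using t by (intro summable_mult summable_geometric) auto
    show "norm (t ^ k / qpoch q q k) \<le> B * norm t ^ k" for k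
      using mult_right_mono[OF B[of k], of "norm t ^ k"]
      by (simp add: norm_divide norm_power field_simps)
  qed
qed

lemma isCont_qexp_0:
  fixes q :: complex
  assumes "norm q < 1"
  shows "isCont (qexp q) 0"
proof -
  have "summable (\<lambda>k. 1 / qpoch q q k * (1 / 2 :: complex) ^ k)"
    using summable_qexp[OF assms, of "1 / 2"] by simp
  then have "isCont (\<lambda>t. \<Sum>k. 1 / qpoch q q k * t ^ k) 0"
    by (rule isCont_powser) simp
  moreover have "qexp q = (\<lambda>t. \<Sum>k. 1 / qpoch q q k * t ^ k)"
    by (simp add: qexp_def fun_eq_iff)
  ultimately show ?thesis
    by simp
qed

lemma qexp_0 [simp]: "qexp q 0 = 1"
  using powser_zero[of "\<lambda>k. 1 / qpoch q q k"] by (simp add: qexp_def)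

lemma qexp_shift:
  fixes q t :: complex
  assumes q: "norm q < 1" and t: "norm t < 1"
  shows "qexp q (q * t) = (1 - t) * qexp q t"
proof -
  have qt: "norm (q * t) < 1"
    using norm_power_mult_less_one[of q t 1] q t by simp
  have "(\<lambda>k. t ^ k / qpoch q q k - (q * t) ^ k / qpoch q q k) sums (qexp q t - qexp q (q * t))"
    unfolding qexp_def using q t qt by (intro sums_diff summable_sums summable_qexp)
  moreover have "(\<lambda>k. t ^ k / qpoch q q k - (q * t) ^ k / qpoch q q k) sums (t * qexp q t)"
  proof -
    have "t ^ Suc k / qpoch q q (Suc k) - (q * t) ^ Suc k / qpoch q q (Suc k) = t * (t ^ k / qpoch q q k)" for k
    proof -
      have "qpoch q q (Suc k) \<noteq> 0"
        by (rule qpoch_q_nonzero[OF q])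
      then have "1 - q * q ^ k \<noteq> 0"
        by (simp add: qpoch_Suc)
      have "t ^ Suc k / qpoch q q (Suc k) - (q * t) ^ Suc k / qpoch q q (Suc k)
          = t ^ Suc k * (1 - q * q ^ k) / (qpoch q q k * (1 - q * q ^ k))"
        by (simp add: qpoch_Suc power_mult_distrib diff_divide_distrib[symmetric] right_diff_distrib
            mult.commute mult.left_commute)
      also have "\<dots> = t * (t ^ k / qpoch q q k)"
        using \<open>1 - q * q ^ k \<noteq> 0\<close> by simp
      finally show ?thesis .
    qed
    then have "(\<lambda>k. t ^ Suc k / qpoch q q (Suc k) - (q * t) ^ Suc k / qpoch q q (Suc k)) sums (t * qexp q t)"
      unfolding qexp_def using sums_mult[OF summable_sums[OF summable_qexp[OF q t]], of t]
      by (simp only: times_divide_eq_right)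
    then show ?thesis
      using sums_Suc[where f = "\<lambda>k. t ^ k / qpoch q q k - (q * t) ^ k / qpoch q q k"] by simp
  qed
  ultimately have "qexp q t - qexp q (q * t) = t * qexp q t"
    by (rule sums_unique2)
  then show ?thesis
    by (simp add: algebra_simps)
qed

theorem qexp_eq_inverse_qpoch_inf:
  fixes q t :: complex
  assumes q: "norm q < 1" and t: "norm t < 1"
  shows "qexp q t = 1 / qpoch_inf t q"
proof -
  have iterate: "qexp q (q ^ N * t) = qexp q t * qpoch t q N" for N
  proof (induction N)
    case (Suc N)
    have "norm (q ^ N * t) < 1"
      using q t by (intro norm_power_mult_less_one) auto
    then show ?case
      using qexp_shift[OF q, of "q ^ N * t"] Suc by (simp add: qpoch_Suc ac_simps)
  qed simp
  have "(\<lambda>N. q ^ N * t) \<longlonglongrightarrow> 0"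
    using tendsto_mult[OF LIMSEQ_power_zero[OF q] tendsto_const[of t]] by simp
  then have "(\<lambda>N. qexp q (q ^ N * t)) \<longlonglongrightarrow> 1"
    using isCont_tendsto_compose[OF isCont_qexp_0[OF q]] by fastforce
  moreover have "(\<lambda>N. qexp q (q ^ N * t)) \<longlonglongrightarrow> qexp q t * qpoch_inf t q"
    unfolding iterate by (intro tendsto_mult tendsto_const qpoch_LIMSEQ q)
  ultimately have "qexp q t * qpoch_inf t q = 1"
    using LIMSEQ_unique by blast
  then show ?thesis
    using qpoch_inf_nonzero[OF q t] by (simp add: field_simps)
qed

corollary euler_sums:
  fixes q t :: complex
  assumes "norm q < 1" "norm t < 1"
  shows "(\<lambda>k. t ^ k / qpoch q q k) sums (1 / qpoch_inf t q)"
  using summable_sums[OF summable_qexp[OF assms]] qexp_eq_inverse_qpoch_inf[OF assms]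
  by (simp add: qexp_def)

lemma funpow_Dxy_Suc:
  "(Dxy q ^^ Suc k) f x y = ((Dxy q ^^ k) f x (y / q) - (Dxy q ^^ k) f (q * x) y) / (x - y / q)"
  by (simp add: Dxy_def)

lemma funpow_Dxy_lincomb:
  assumes "\<And>a b. h (q ^ a * x) (y / q ^ b) = \<alpha> * f (q ^ a * x) (y / q ^ b) + \<beta> * g (q ^ a * x) (y / q ^ b)"
  shows "(Dxy q ^^ k) h x y = \<alpha> * (Dxy q ^^ k) f x y + \<beta> * (Dxy q ^^ k) g x y"
  using assms
proof (induction k arbitrary: x y)
  case 0
  then show ?case
    using "0.prems"[of 0 0] by simp
next
  case (Suc k)
  have "(Dxy q ^^ k) h x (y / q) = \<alpha> * (Dxy q ^^ k) f x (y / q) + \<beta> * (Dxy q ^^ k) g x (y / q)"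
    using Suc.prems[of _ "Suc b" for b] by (intro Suc.IH) (simp add: mult.commute)
  moreover have "(Dxy q ^^ k) h (q * x) y = \<alpha> * (Dxy q ^^ k) f (q * x) y + \<beta> * (Dxy q ^^ k) g (q * x) y"
    using Suc.prems[of "Suc a" for a] by (intro Suc.IH) (simp add: ac_simps)
  ultimately show ?case
    unfolding funpow_Dxy_Suc by (simp add: diff_divide_distrib add_divide_distrib algebra_simps)
qed

lemma funpow_Dxy_scale:
  assumes "\<And>a b. h (q ^ a * x) (y / q ^ b) = c * f (q ^ a * x) (y / q ^ b)"
  shows "(Dxy q ^^ k) h x y = c * (Dxy q ^^ k) f x y"
  using funpow_Dxy_lincomb[of h q x y c f 0 f k] assms by simp

lemma funpow_Dxy_Suc_right: "(Dxy q ^^ Suc k) f x y = (Dxy q ^^ k) (Dxy q f) x y"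
  by (simp only: funpow_Suc_right comp_def)

lemma funpow_Dxy_eigen:
  assumes "\<And>a b. Dxy q f (q ^ a * x) (y / q ^ b) = c * f (q ^ a * x) (y / q ^ b)"
  shows "(Dxy q ^^ k) f x y = c ^ k * f x y"
proof (induction k)
  case (Suc k)
  then show ?case
    unfolding funpow_Dxy_Suc_right funpow_Dxy_scale[where h = "Dxy q f", OF assms] by simp
qed simp

text \<open>The denominators met when \<open>D\<^sub>x\<^sub>y\<close> is iterated at \<open>(x, y)\<close> are those of single
  steps at the points \<open>(q\<^sup>i x, y / q\<^sup>j)\<close>; this condition keeps all of them nonzero.\<close>
definition Dxy_admissible :: "complex \<Rightarrow> complex \<Rightarrow> complex \<Rightarrow> bool" where
  "Dxy_admissible q x y \<longleftrightarrow> (\<forall>i j::nat. q ^ i * x \<noteq> y / q ^ (j + 1))"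

lemma Dxy_admissible_orbit:
  assumes "Dxy_admissible q x y"
  shows "Dxy_admissible q (q ^ a * x) (y / q ^ b)"
  unfolding Dxy_admissible_def
proof (intro allI)
  fix i j :: nat
  have "q ^ (i + a) * x \<noteq> y / q ^ (j + b + 1)"
    using assms by (simp add: Dxy_admissible_def)
  then show "q ^ i * (q ^ a * x) \<noteq> y / q ^ b / q ^ (j + 1)"
    by (simp add: power_add ac_simps)
qed

lemma Dxy_admissible_denominator:
  "Dxy_admissible q x y \<Longrightarrow> x - y / q \<noteq> 0"
  unfolding Dxy_admissible_def by (metis power_0 power_one_right mult_1 add_0 right_minus_eq)

lemma Pn_0 [simp]: "Pn q 0 x y = 1"
  by (simp add: Pn_def)

lemma Pn_Suc: "Pn q (Suc n) x y = Pn q n x y * (x - q ^ n * y)"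
  by (simp add: Pn_def lessThan_Suc)

lemma Pn_scale: "Pn q n (q * x) (q * y) = q ^ n * Pn q n x y"
  by (induction n) (simp_all add: Pn_Suc algebra_simps)

lemma Dxy_Pn_Suc:
  assumes "q \<noteq> 0" "x - y / q \<noteq> 0"
  shows "Dxy q (Pn q (Suc m)) x y = (1 - q ^ Suc m) * Pn q m x y"
proof -
  have shift_y: "Pn q (Suc m) x (y / q) = (x - y / q) * Pn q m x y"
    unfolding Pn_def prod.lessThan_Suc_shift using assms(1) by simp
  have shift_x: "Pn q (Suc m) (q * x) y = q ^ Suc m * (x - y / q) * Pn q m x y"
  proof -
    have "Pn q (Suc m) (q * x) y = (q * (x - y / q)) * (\<Prod>k<m. q * (x - q ^ k * y))"
      unfolding Pn_def prod.lessThan_Suc_shift using assms(1) by (simp add: algebra_simps)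
    also have "\<dots> = q ^ Suc m * (x - y / q) * Pn q m x y"
      by (simp add: Pn_def prod.distrib)
    finally show ?thesis .
  qed
  show ?thesis
    unfolding Dxy_def shift_y shift_x using assms(2) by (simp add: field_simps)
qed

lemma funpow_Dxy_Pn:
  fixes q :: complex
  assumes q0: "q \<noteq> 0" and q: "norm q < 1" and adm: "Dxy_admissible q x y"
  shows "(Dxy q ^^ k) (Pn q n) x y
    = (if k \<le> n then qpoch q q n / qpoch q q (n - k) * Pn q (n - k) x y else 0)"
proof (induction k arbitrary: n)
  case 0
  then show ?case
    using qpoch_q_nonzero[OF q] by simp
next
  case (Suc k)
  have denom: "q ^ a * x - y / q ^ b / q \<noteq> 0" for a b
    by (rule Dxy_admissible_denominator[OF Dxy_admissible_orbit[OF adm]])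
  show ?case
  proof (cases n)
    case 0
    have "(Dxy q ^^ k) (Dxy q (Pn q n)) x y = 0 * (Dxy q ^^ k) (Pn q n) x y"
      using 0 by (intro funpow_Dxy_scale) (simp add: Dxy_def)
    then show ?thesis
      unfolding funpow_Dxy_Suc_right using 0 by simp
  next
    case (Suc m)
    have "(Dxy q ^^ k) (Dxy q (Pn q (Suc m))) x y = (1 - q ^ Suc m) * (Dxy q ^^ k) (Pn q m) x y"
      using denom by (intro funpow_Dxy_scale) (simp add: Dxy_Pn_Suc q0)
    then show ?thesis
      unfolding funpow_Dxy_Suc_right using Suc qpoch_q_nonzero[OF q] by (simp add: Suc.IH qpoch_Suc)
  qed
qed

lemma qbinom_0 [simp]:
  fixes q :: complex
  assumes "norm q < 1"
  shows "qbinom q n 0 = 1"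
  using qpoch_q_nonzero[OF assms, of n] by (simp add: qbinom_def)

lemma qbinom_self [simp]:
  fixes q :: complex
  assumes "norm q < 1"
  shows "qbinom q n n = 1"
  using qpoch_q_nonzero[OF assms, of n] by (simp add: qbinom_def)

lemma qbinom_Suc_Suc: "qbinom q (Suc n) (Suc k) = qbinom q n k * (1 - q ^ Suc n) / (1 - q ^ Suc k)"
  by (simp add: qbinom_def qpoch_Suc)

lemma qbinom_Suc_right:
  fixes q :: complex
  assumes q: "norm q < 1" and "k < n"
  shows "qbinom q n (Suc k) = qbinom q n k * (1 - q ^ (n - k)) / (1 - q ^ Suc k)"
proof -
  have "1 - q ^ (n - k) \<noteq> 0"
    using one_minus_power_nonzero[OF q] \<open>k < n\<close> by simp
  moreover have "qpoch q q (n - k) = qpoch q q (n - Suc k) * (1 - q ^ (n - k))"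
  proof -
    have "n - k = Suc (n - Suc k)"
      using \<open>k < n\<close> by simp
    then show ?thesis
      by (simp only: qpoch_Suc power_Suc)
  qed
  ultimately show ?thesis
    by (simp add: qbinom_def qpoch_Suc ac_simps)
qed

lemma qbinom_pascal:
  fixes q :: complex
  assumes q: "norm q < 1" and "k < n"
  shows "qbinom q (Suc n) (Suc k) = q ^ Suc k * qbinom q n (Suc k) + qbinom q n k"
    and "qbinom q (Suc n) (Suc k) = qbinom q n (Suc k) + q ^ (n - k) * qbinom q n k"
proof -
  have "1 - q ^ Suc k \<noteq> 0"
    using one_minus_power_nonzero[OF q] by blast
  moreover have "q ^ k * q ^ (n - k) = q ^ n"
    using \<open>k < n\<close> by (simp flip: power_add)
  ultimately show "qbinom q (Suc n) (Suc k) = q ^ Suc k * qbinom q n (Suc k) + qbinom q n k"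
    and "qbinom q (Suc n) (Suc k) = qbinom q n (Suc k) + q ^ (n - k) * qbinom q n k"
    unfolding qbinom_Suc_Suc qbinom_Suc_right[OF assms] by (simp_all add: field_simps)
qed

text \<open>For \<open>k > n\<close> the truncated subtraction makes \<open>qbinom q n k\<close> nonzero, so Pascal's rule
  needs the Gaussian binomial extended by zero.\<close>
definition qbinom_trunc :: "complex \<Rightarrow> nat \<Rightarrow> nat \<Rightarrow> complex" where
  "qbinom_trunc q n k = (if k \<le> n then qbinom q n k else 0)"

lemma qbinom_trunc_0 [simp]: "norm q < 1 \<Longrightarrow> qbinom_trunc q n 0 = 1"
  by (simp add: qbinom_trunc_def)

lemma qbinom_trunc_eq_0: "n < k \<Longrightarrow> qbinom_trunc q n k = 0"
  by (simp add: qbinom_trunc_def)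

lemma sum_qbinom_trunc: "(\<Sum>k\<le>n. qbinom q n k * f k) = (\<Sum>k\<le>n. qbinom_trunc q n k * f k)"
  by (rule sum.cong) (auto simp: qbinom_trunc_def)

lemma qbinom_trunc_pascal:
  fixes q :: complex
  assumes q: "norm q < 1"
  shows "qbinom_trunc q (Suc n) (Suc k) = q ^ Suc k * qbinom_trunc q n (Suc k) + qbinom_trunc q n k"
    and "qbinom_trunc q (Suc n) (Suc k) = qbinom_trunc q n (Suc k) + q ^ (n - k) * qbinom_trunc q n k"
proof -
  consider "k < n" | "k = n" | "n < k"
    by linarith
  then have "qbinom_trunc q (Suc n) (Suc k) = q ^ Suc k * qbinom_trunc q n (Suc k) + qbinom_trunc q n k
    \<and> qbinom_trunc q (Suc n) (Suc k) = qbinom_trunc q n (Suc k) + q ^ (n - k) * qbinom_trunc q n k"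
    by cases (use qbinom_pascal[OF q] q in \<open>auto simp: qbinom_trunc_def\<close>)
  then show "qbinom_trunc q (Suc n) (Suc k) = q ^ Suc k * qbinom_trunc q n (Suc k) + qbinom_trunc q n k"
    and "qbinom_trunc q (Suc n) (Suc k) = qbinom_trunc q n (Suc k) + q ^ (n - k) * qbinom_trunc q n k"
    by blast+
qed

lemma sum_qbinom_trunc_pascal1:
  fixes q :: complex
  assumes q: "norm q < 1"
  shows "(\<Sum>k\<le>Suc n. qbinom_trunc q (Suc n) k * c k)
    = (\<Sum>k\<le>n. q ^ k * qbinom_trunc q n k * c k) + (\<Sum>k\<le>n. qbinom_trunc q n k * c (Suc k))"
proof -
  have "(\<Sum>k\<le>Suc n. qbinom_trunc q (Suc n) k * c k)
      = c 0 + (\<Sum>k\<le>n. q ^ Suc k * qbinom_trunc q n (Suc k) * c (Suc k)) + (\<Sum>k\<le>n. qbinom_trunc q n k * c (Suc k))"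
    using q by (subst sum.atMost_Suc_shift) (simp add: qbinom_trunc_pascal(1) sum.distrib algebra_simps)
  also have "c 0 + (\<Sum>k\<le>n. q ^ Suc k * qbinom_trunc q n (Suc k) * c (Suc k))
      = (\<Sum>k\<le>Suc n. q ^ k * qbinom_trunc q n k * c k)"
    using q by (subst sum.atMost_Suc_shift) (simp del: power_Suc)
  also have "\<dots> = (\<Sum>k\<le>n. q ^ k * qbinom_trunc q n k * c k)"
    by (simp add: qbinom_trunc_eq_0)
  finally show ?thesis .
qed

lemma sum_qbinom_trunc_pascal2:
  fixes q :: complex
  assumes q: "norm q < 1"
  shows "(\<Sum>k\<le>Suc n. qbinom_trunc q (Suc n) k * c k)
    = (\<Sum>k\<le>n. qbinom_trunc q n k * c k) + (\<Sum>k\<le>n. q ^ (n - k) * qbinom_trunc q n k * c (Suc k))"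
proof -
  have "(\<Sum>k\<le>Suc n. qbinom_trunc q (Suc n) k * c k)
      = c 0 + (\<Sum>k\<le>n. qbinom_trunc q n (Suc k) * c (Suc k)) + (\<Sum>k\<le>n. q ^ (n - k) * qbinom_trunc q n k * c (Suc k))"
    using q by (subst sum.atMost_Suc_shift) (simp add: qbinom_trunc_pascal(2) sum.distrib algebra_simps)
  also have "c 0 + (\<Sum>k\<le>n. qbinom_trunc q n (Suc k) * c (Suc k)) = (\<Sum>k\<le>Suc n. qbinom_trunc q n k * c k)"
    using q by (subst sum.atMost_Suc_shift) simp
  also have "\<dots> = (\<Sum>k\<le>n. qbinom_trunc q n k * c k)"
    by (simp add: qbinom_trunc_eq_0)
  finally show ?thesis .
qed

lemma sum_qbinom_Pn_Suc:
  fixes q :: complex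
  assumes q: "norm q < 1"
  shows "(\<Sum>k\<le>Suc n. qbinom q (Suc n) k * Pn q (Suc n - k) x y)
    = x * (\<Sum>k\<le>n. qbinom q n k * Pn q (n - k) x y)
      + (1 - y) * (\<Sum>k\<le>n. qbinom q n k * Pn q (n - k) (q * x) (q * y))"
proof -
  have "(\<Sum>k\<le>Suc n. qbinom q (Suc n) k * Pn q (Suc n - k) x y)
      = (\<Sum>k\<le>n. qbinom_trunc q n k * Pn q (Suc n - k) x y)
        + (\<Sum>k\<le>n. q ^ (n - k) * qbinom_trunc q n k * Pn q (n - k) x y)"
    unfolding sum_qbinom_trunc sum_qbinom_trunc_pascal2[OF q] by simp
  also have "\<dots> = (\<Sum>k\<le>n. x * (qbinom_trunc q n k * Pn q (n - k) x y)
      + (1 - y) * (qbinom_trunc q n k * Pn q (n - k) (q * x) (q * y)))"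
    unfolding sum.distrib[symmetric]
  proof (rule sum.cong)
    fix k
    assume "k \<in> {..n}"
    then have "Suc n - k = Suc (n - k)"
      by auto
    then show "qbinom_trunc q n k * Pn q (Suc n - k) x y + q ^ (n - k) * qbinom_trunc q n k * Pn q (n - k) x y
      = x * (qbinom_trunc q n k * Pn q (n - k) x y) + (1 - y) * (qbinom_trunc q n k * Pn q (n - k) (q * x) (q * y))"
      by (simp add: Pn_Suc Pn_scale algebra_simps)
  qed simp
  finally show ?thesis
    by (simp add: sum_qbinom_trunc sum.distrib sum_distrib_left)
qed

lemma sum_qbinom_qpoch_Suc:
  fixes q :: complex
  assumes q: "norm q < 1"
  shows "(\<Sum>k\<le>Suc n. qbinom q (Suc n) k * qpoch y q k * x ^ (Suc n - k))
    = x * (\<Sum>k\<le>n. qbinom q n k * qpoch y q k * x ^ (n - k))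
      + (1 - y) * (\<Sum>k\<le>n. qbinom q n k * qpoch (q * y) q k * (q * x) ^ (n - k))"
proof -
  have "(\<Sum>k\<le>Suc n. qbinom q (Suc n) k * qpoch y q k * x ^ (Suc n - k))
      = (\<Sum>k\<le>n. qbinom_trunc q n k * (qpoch y q k * x ^ (Suc n - k)))
        + (\<Sum>k\<le>n. q ^ (n - k) * qbinom_trunc q n k * (qpoch y q (Suc k) * x ^ (n - k)))"
    unfolding mult.assoc sum_qbinom_trunc sum_qbinom_trunc_pascal2[OF q] by simp
  also have "\<dots> = (\<Sum>k\<le>n. x * (qbinom_trunc q n k * (qpoch y q k * x ^ (n - k)))
      + (1 - y) * (qbinom_trunc q n k * (qpoch (q * y) q k * (q * x) ^ (n - k))))"
    unfolding sum.distrib[symmetric]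
  proof (rule sum.cong)
    fix k
    assume "k \<in> {..n}"
    then have "Suc n - k = Suc (n - k)"
      by auto
    then show "qbinom_trunc q n k * (qpoch y q k * x ^ (Suc n - k))
        + q ^ (n - k) * qbinom_trunc q n k * (qpoch y q (Suc k) * x ^ (n - k))
      = x * (qbinom_trunc q n k * (qpoch y q k * x ^ (n - k)))
        + (1 - y) * (qbinom_trunc q n k * (qpoch (q * y) q k * (q * x) ^ (n - k)))"
      by (simp add: qpoch_Suc_shift algebra_simps)
  qed simp
  finally show ?thesis
    by (simp add: sum_qbinom_trunc sum.distrib sum_distrib_left mult.assoc)
qed

lemma sum_qbinom_Pn_eq_sum_qbinom_qpoch:
  fixes q :: complex
  assumes q: "norm q < 1"
  shows "(\<Sum>k\<le>n. qbinom q n k * Pn q (n - k) x y) = (\<Sum>k\<le>n. qbinom q n k * qpoch y q k * x ^ (n - k))"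
proof (induction n arbitrary: x y)
  case (Suc n)
  then show ?case
    unfolding sum_qbinom_Pn_Suc[OF q] sum_qbinom_qpoch_Suc[OF q] by simp
qed (simp add: q)

text \<open>\<open>wPn q t n\<close> is the function in braces, \<open>E_wPn q t n x y\<close> the claimed value of
  \<open>\<bbbE>(D\<^sub>x\<^sub>y)\<close> on it and \<open>E_wPn_sum\<close> its finite sum.\<close>
definition wPn :: "complex \<Rightarrow> complex \<Rightarrow> nat \<Rightarrow> complex \<Rightarrow> complex \<Rightarrow> complex" where
  "wPn q t n x y = qpoch_inf (y * t) q / qpoch_inf (x * t) q * (Pn q n x y / qpoch (y * t) q n)"

definition E_wPn_sum :: "complex \<Rightarrow> complex \<Rightarrow> nat \<Rightarrow> complex \<Rightarrow> complex \<Rightarrow> complex" where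
  "E_wPn_sum q t n x y
    = (\<Sum>k\<le>n. qbinom q n k * (qpoch y q k * qpoch (x * t) q k / qpoch (y * t) q k) * x ^ (n - k))"

definition E_wPn :: "complex \<Rightarrow> complex \<Rightarrow> nat \<Rightarrow> complex \<Rightarrow> complex \<Rightarrow> complex" where
  "E_wPn q t n x y = qpoch_inf (y * t) q / (qpoch_inf t q * qpoch_inf (x * t) q) * E_wPn_sum q t n x y"

lemma sums_E_wPn_t_zero:
  fixes q :: complex
  assumes q0: "q \<noteq> 0" and q: "norm q < 1" and adm: "Dxy_admissible q x y"
  shows "Eterm q (wPn q 0 n) x y sums E_wPn q 0 n x y"
proof -
  have wPn: "wPn q 0 n = Pn q n"
    by (simp add: wPn_def fun_eq_iff)
  have Eterm: "Eterm q (Pn q n) x y k = (if k \<le> n then qbinom q n k * Pn q (n - k) x y else 0)" for k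
    using qpoch_q_nonzero[OF q, of k] by (simp add: Eterm_def funpow_Dxy_Pn[OF q0 q adm] qbinom_def)
  have "Eterm q (Pn q n) x y sums (\<Sum>k\<le>n. Eterm q (Pn q n) x y k)"
    by (rule sums_finite) (auto simp: Eterm)
  also have "(\<Sum>k\<le>n. Eterm q (Pn q n) x y k) = (\<Sum>k\<le>n. qbinom q n k * Pn q (n - k) x y)"
    by (simp add: Eterm)
  also have "\<dots> = E_wPn q 0 n x y"
    by (simp add: sum_qbinom_Pn_eq_sum_qbinom_qpoch[OF q] E_wPn_def E_wPn_sum_def mult.assoc)
  finally show ?thesis
    unfolding wPn .
qed

lemma Dxy_wPn_0:
  fixes q t :: complex
  assumes q0: "q \<noteq> 0" and q: "norm q < 1" and denom: "x - y / q \<noteq> 0" and xt: "x * t \<noteq> 1"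
  shows "Dxy q (wPn q t 0) x y = t * wPn q t 0 x y"
proof -
  have "qpoch_inf (y / q * t) q = (1 - y / q * t) * qpoch_inf (y * t) q"
    using qpoch_inf_shift[OF q, of "y / q * t"] q0 by (simp add: field_simps)
  then have shift_y: "wPn q t 0 x (y / q) = (1 - y / q * t) * wPn q t 0 x y"
    by (simp add: wPn_def)
  have "qpoch_inf (x * t) q = (1 - x * t) * qpoch_inf (q * x * t) q"
    using qpoch_inf_shift[OF q, of "x * t"] by (simp add: ac_simps)
  moreover have "1 - x * t \<noteq> 0"
    using xt by auto
  ultimately have shift_x: "wPn q t 0 (q * x) y = (1 - x * t) * wPn q t 0 x y"
    by (simp add: wPn_def)
  have "(1 - y / q * t) - (1 - x * t) = t * (x - y / q)"
    by (simp add: algebra_simps)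
  then show ?thesis
    unfolding Dxy_def shift_y shift_x using denom by (simp add: left_diff_distrib[symmetric])
qed

lemma sums_E_wPn_n_zero:
  fixes q t :: complex
  assumes q0: "q \<noteq> 0" and q: "norm q < 1" and t: "norm t < 1" and xt: "norm (x * t) < 1"
    and adm: "Dxy_admissible q x y"
  shows "Eterm q (wPn q t 0) x y sums E_wPn q t 0 x y"
proof -
  have "(Dxy q ^^ k) (wPn q t 0) x y = t ^ k * wPn q t 0 x y" for k
  proof (rule funpow_Dxy_eigen, rule Dxy_wPn_0[OF q0 q])
    fix a b :: nat
    show "q ^ a * x - y / q ^ b / q \<noteq> 0"
      by (rule Dxy_admissible_denominator[OF Dxy_admissible_orbit[OF adm]])
    have "norm (q ^ a * (x * t)) < 1"
      using norm_power_mult_less_one[OF _ xt, of q a] q by simp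
    then show "q ^ a * x * t \<noteq> 1"
      by (auto simp: ac_simps)
  qed
  then have "Eterm q (wPn q t 0) x y = (\<lambda>k. t ^ k / qpoch q q k * wPn q t 0 x y)"
    by (simp add: Eterm_def fun_eq_iff)
  moreover have "(\<lambda>k. t ^ k / qpoch q q k * wPn q t 0 x y) sums (1 / qpoch_inf t q * wPn q t 0 x y)"
    by (rule sums_mult2[OF euler_sums[OF q t]])
  moreover have "1 / qpoch_inf t q * wPn q t 0 x y = E_wPn q t 0 x y"
    using q by (simp add: E_wPn_def E_wPn_sum_def wPn_def)
  ultimately show ?thesis
    by simp
qed

lemma wPn_Suc:
  fixes q t :: complex
  assumes q: "norm q < 1" and t0: "t \<noteq> 0" and xt: "norm (x * t) < 1"
    and yt: "qpoch (y * t) q (Suc n) \<noteq> 0"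
  shows "wPn q t (Suc n) x y = (wPn q t n x y - wPn q (q * t) n x y) / t"
proof -
  define u v w where "u = 1 - x * t" and "v = 1 - y * t" and "w = 1 - y * t * q ^ n"
  have nonzero: "u \<noteq> 0" "v \<noteq> 0" "w \<noteq> 0" "qpoch_inf (x * t) q \<noteq> 0" "qpoch (y * t) q n \<noteq> 0"
    using xt qpoch_inf_nonzero[OF q xt] qpoch_factor_nonzero[OF yt, of 0]
      qpoch_nonzero_le[OF yt] qpoch_factor_nonzero[OF yt, of n]
    by (auto simp: u_def v_def w_def)
  have x_shift: "qpoch_inf (x * (q * t)) q = qpoch_inf (x * t) q / u"
    using qpoch_inf_shift[OF q, of "x * t"] nonzero by (simp add: u_def field_simps)
  have y_shift: "qpoch_inf (y * (q * t)) q = qpoch_inf (y * t) q / v"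
    using qpoch_inf_shift[OF q, of "y * t"] nonzero by (simp add: v_def field_simps)
  have "v * qpoch (y * t * q) q n = qpoch (y * t) q n * w"
    unfolding v_def w_def by (metis qpoch_Suc qpoch_Suc_shift)
  then have yn_shift: "qpoch (y * (q * t)) q n = qpoch (y * t) q n * w / v"
    using nonzero by (simp add: field_simps)
  have shift_t: "wPn q (q * t) n x y = u / w * wPn q t n x y"
    unfolding wPn_def x_shift y_shift yn_shift using nonzero by (simp add: field_simps)
  have "w - u = t * (x - q ^ n * y)"
    by (simp add: u_def w_def algebra_simps)
  have "(wPn q t n x y - wPn q (q * t) n x y) / t = wPn q t n x y * (w - u) / (w * t)"
    unfolding shift_t using nonzero by (simp add: field_simps)
  also have "\<dots> = wPn q t n x y * (x - q ^ n * y) / w"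
    unfolding \<open>w - u = t * (x - q ^ n * y)\<close> using t0 by simp
  also have "\<dots> = wPn q t (Suc n) x y"
    by (simp add: wPn_def Pn_Suc qpoch_Suc w_def mult.assoc)
  finally show ?thesis ..
qed

lemma E_wPn_sum_Suc:
  fixes q t :: complex
  assumes q: "norm q < 1" and yt: "qpoch (y * t) q (Suc n) \<noteq> 0"
  shows "t * E_wPn_sum q t (Suc n) x y
    = E_wPn_sum q t n x y - (1 - t) * ((1 - x * t) / (1 - y * t) * E_wPn_sum q (q * t) n x y)"
proof -
  define a where "a s k = qpoch y q k * qpoch (x * s) q k / qpoch (y * s) q k" for s k
  define \<rho> where "\<rho> k = (1 - x * t * q ^ k) / (1 - y * t * q ^ k)" for k
  have sum_a: "E_wPn_sum q s m x y = (\<Sum>k\<le>m. qbinom_trunc q m k * (a s k * x ^ (m - k)))" for s m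
    unfolding E_wPn_sum_def a_def mult.assoc sum_qbinom_trunc ..
  have summand: "t * (q ^ k * qbinom_trunc q n k * (a t k * x ^ (Suc n - k))
        + qbinom_trunc q n k * (a t (Suc k) * x ^ (n - k)))
      = qbinom_trunc q n k * (a t k * x ^ (n - k))
        - (1 - t) * ((1 - x * t) / (1 - y * t) * (qbinom_trunc q n k * (a (q * t) k * x ^ (n - k))))"
    if "k \<le> n" for k
  proof -
    have "1 - y * t * q ^ k \<noteq> 0"
      using qpoch_factor_nonzero[OF yt] that by simp
    then have key: "t * (q ^ k * x + (1 - y * q ^ k) * \<rho> k) = 1 - (1 - t) * \<rho> k"
      by (simp add: \<rho>_def field_simps)
    have a_Suc: "a t (Suc k) = a t k * ((1 - y * q ^ k) * \<rho> k)"
      by (simp add: a_def \<rho>_def qpoch_Suc)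
    have a_qt: "(1 - x * t) / (1 - y * t) * a (q * t) k = a t k * \<rho> k"
    proof -
      have "(1 - x * t) * qpoch (x * (q * t)) q k = qpoch (x * t) q k * (1 - x * t * q ^ k)"
        and "(1 - y * t) * qpoch (y * (q * t)) q k = qpoch (y * t) q k * (1 - y * t * q ^ k)"
        by (metis qpoch_Suc qpoch_Suc_shift mult.assoc mult.commute)+
      then show ?thesis
        by (simp add: a_def \<rho>_def)
    qed
    have "Suc n - k = Suc (n - k)"
      using that by simp
    then have "t * (q ^ k * qbinom_trunc q n k * (a t k * x ^ (Suc n - k))
        + qbinom_trunc q n k * (a t (Suc k) * x ^ (n - k)))
      = qbinom_trunc q n k * x ^ (n - k) * a t k * (t * (q ^ k * x + (1 - y * q ^ k) * \<rho> k))"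
      by (simp add: a_Suc algebra_simps)
    also have "\<dots> = qbinom_trunc q n k * x ^ (n - k) * (a t k - (1 - t) * (a t k * \<rho> k))"
      unfolding key by (simp add: algebra_simps)
    also have "\<dots> = qbinom_trunc q n k * (a t k * x ^ (n - k))
        - (1 - t) * ((1 - x * t) / (1 - y * t) * (qbinom_trunc q n k * (a (q * t) k * x ^ (n - k))))"
      unfolding a_qt[symmetric] by (simp add: algebra_simps)
    finally show ?thesis .
  qed
  have "t * E_wPn_sum q t (Suc n) x y
      = (\<Sum>k\<le>n. t * (q ^ k * qbinom_trunc q n k * (a t k * x ^ (Suc n - k))
          + qbinom_trunc q n k * (a t (Suc k) * x ^ (n - k))))"
    unfolding sum_a sum_qbinom_trunc_pascal1[OF q] by (simp add: distrib_left sum_distrib_left sum.distrib)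
  also have "\<dots> = (\<Sum>k\<le>n. qbinom_trunc q n k * (a t k * x ^ (n - k))
      - (1 - t) * ((1 - x * t) / (1 - y * t) * (qbinom_trunc q n k * (a (q * t) k * x ^ (n - k)))))"
    by (intro sum.cong refl) (simp add: summand)
  also have "\<dots> = E_wPn_sum q t n x y - (1 - t) * ((1 - x * t) / (1 - y * t) * E_wPn_sum q (q * t) n x y)"
    unfolding sum_a by (simp add: sum_subtractf sum_distrib_left)
  finally show ?thesis .
qed

lemma E_wPn_Suc:
  fixes q t :: complex
  assumes q: "norm q < 1" and t0: "t \<noteq> 0" and t: "norm t < 1" and xt: "norm (x * t) < 1"
    and yt: "qpoch (y * t) q (Suc n) \<noteq> 0"
  shows "E_wPn q t (Suc n) x y = (E_wPn q t n x y - E_wPn q (q * t) n x y) / t"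
proof -
  define K where "K = qpoch_inf (y * t) q / (qpoch_inf t q * qpoch_inf (x * t) q)"
  define s u v where "s = 1 - t" and "u = 1 - x * t" and "v = 1 - y * t"
  have nonzero: "s \<noteq> 0" "u \<noteq> 0" "v \<noteq> 0" "qpoch_inf t q \<noteq> 0" "qpoch_inf (x * t) q \<noteq> 0"
    using t xt qpoch_inf_nonzero[OF q t] qpoch_inf_nonzero[OF q xt] qpoch_factor_nonzero[OF yt, of 0]
    by (auto simp: s_def u_def v_def)
  have t_shift: "qpoch_inf (q * t) q = qpoch_inf t q / s"
    using qpoch_inf_shift[OF q, of t] nonzero by (simp add: s_def field_simps)
  have x_shift: "qpoch_inf (x * (q * t)) q = qpoch_inf (x * t) q / u"
    using qpoch_inf_shift[OF q, of "x * t"] nonzero by (simp add: u_def field_simps)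
  have y_shift: "qpoch_inf (y * (q * t)) q = qpoch_inf (y * t) q / v"
    using qpoch_inf_shift[OF q, of "y * t"] nonzero by (simp add: v_def field_simps)
  have shift_t: "E_wPn q (q * t) n x y = K * (s * (u / v * E_wPn_sum q (q * t) n x y))"
    unfolding E_wPn_def K_def t_shift x_shift y_shift using nonzero by (simp add: field_simps)
  have "(E_wPn q t n x y - E_wPn q (q * t) n x y) / t
      = K * (E_wPn_sum q t n x y - s * (u / v * E_wPn_sum q (q * t) n x y)) / t"
    unfolding shift_t by (simp add: E_wPn_def K_def right_diff_distrib)
  also have "\<dots> = K * (t * E_wPn_sum q t (Suc n) x y) / t"
    unfolding E_wPn_sum_Suc[OF q yt] s_def u_def v_def ..
  also have "\<dots> = E_wPn q t (Suc n) x y"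
    using t0 by (simp add: E_wPn_def K_def)
  finally show ?thesis ..
qed

lemma qpoch_divide_power_nonzero_shift:
  assumes q0: "q \<noteq> 0" and nz: "\<forall>j. qpoch (a / q ^ j) q (Suc n) \<noteq> 0"
  shows "qpoch (q * a / q ^ j) q n \<noteq> 0"
proof (cases j)
  case 0
  have "(1 - a) * qpoch (a * q) q n \<noteq> 0"
    using nz[rule_format, of 0] by (simp add: qpoch_Suc_shift)
  then show ?thesis
    using 0 by (simp add: mult.commute)
next
  case (Suc i)
  then have "q * a / q ^ j = a / q ^ i"
    using q0 by simp
  then show ?thesis
    using qpoch_nonzero_le[of "a / q ^ i" q "Suc n" n] nz by simp
qed

lemma Eterm_wPn_Suc:
  fixes q t :: complex
  assumes q: "norm q < 1" and t0: "t \<noteq> 0" and xt: "norm (x * t) < 1"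
    and yt: "\<forall>j. qpoch (y * t / q ^ j) q (Suc n) \<noteq> 0"
  shows "Eterm q (wPn q t (Suc n)) x y
    = (\<lambda>k. (Eterm q (wPn q t n) x y k - Eterm q (wPn q (q * t) n) x y k) / t)"
proof -
  have "(Dxy q ^^ k) (wPn q t (Suc n)) x y
      = 1 / t * (Dxy q ^^ k) (wPn q t n) x y + (- 1 / t) * (Dxy q ^^ k) (wPn q (q * t) n) x y" for k
  proof (rule funpow_Dxy_lincomb)
    fix a b :: nat
    have "norm (q ^ a * x * t) < 1"
      using norm_power_mult_less_one[OF _ xt, of q a] q by (simp add: ac_simps)
    moreover have "qpoch (y / q ^ b * t) q (Suc n) \<noteq> 0"
      using yt by simp
    ultimately show "wPn q t (Suc n) (q ^ a * x) (y / q ^ b)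
        = 1 / t * wPn q t n (q ^ a * x) (y / q ^ b) + (- 1 / t) * wPn q (q * t) n (q ^ a * x) (y / q ^ b)"
      using wPn_Suc[OF q t0] by (simp add: diff_divide_distrib)
  qed
  then show ?thesis
    by (simp add: Eterm_def fun_eq_iff diff_divide_distrib mult.commute)
qed

lemma sums_E_wPn_t_nonzero:
  fixes q t :: complex
  assumes q0: "q \<noteq> 0" and q: "norm q < 1" and adm: "Dxy_admissible q x y"
  shows "t \<noteq> 0 \<Longrightarrow> norm t < 1 \<Longrightarrow> norm (x * t) < 1 \<Longrightarrow> (\<forall>j. qpoch (y * t / q ^ j) q n \<noteq> 0)
    \<Longrightarrow> Eterm q (wPn q t n) x y sums E_wPn q t n x y"
proof (induction n arbitrary: t)
  case 0
  then show ?case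
    using sums_E_wPn_n_zero[OF q0 q _ _ adm] by blast
next
  case (Suc n)
  note t0 = Suc.prems(1) and t = Suc.prems(2) and xt = Suc.prems(3) and yt = Suc.prems(4)
  have qt: "norm (q * t) < 1"
    using norm_power_mult_less_one[of q t 1] q t by simp
  have "norm (q * (x * t)) < 1"
    using norm_power_mult_less_one[of q "x * t" 1] q xt by simp
  then have xqt: "norm (x * (q * t)) < 1"
    by (simp add: ac_simps)
  have "Eterm q (wPn q t n) x y sums E_wPn q t n x y"
    using yt qpoch_nonzero_le[of "y * t / q ^ j" q "Suc n" n for j] by (intro Suc.IH t0 t xt allI) simp
  moreover have "Eterm q (wPn q (q * t) n) x y sums E_wPn q (q * t) n x y"
    using qpoch_divide_power_nonzero_shift[OF q0 yt] q0 t0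
    by (intro Suc.IH qt xqt allI) (simp_all add: ac_simps)
  ultimately have "Eterm q (wPn q t (Suc n)) x y sums ((E_wPn q t n x y - E_wPn q (q * t) n x y) / t)"
    unfolding Eterm_wPn_Suc[OF q t0 xt yt] by (intro sums_divide sums_diff)
  then show ?case
    using E_wPn_Suc[OF q t0 t xt] yt[rule_format, of 0] by simp
qed

theorem lemma2p3:
  fixes q t x y :: complex and n :: nat
  assumes "q \<noteq> 0" and "norm q < 1"
    and "norm t < 1" and "norm (x * t) < 1"
    and "\<forall>i j::nat. q ^ i * x \<noteq> y / q ^ (j + 1)"
    and "\<forall>j::nat. qpoch (y * t / q ^ j) q n \<noteq> 0"
  shows "Eterm q (\<lambda>x y. qpoch_inf (y * t) q / qpoch_inf (x * t) q * (Pn q n x y / qpoch (y * t) q n)) x y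
           sums (qpoch_inf (y * t) q / (qpoch_inf t q * qpoch_inf (x * t) q) *
                 (\<Sum>k\<le>n. qbinom q n k * (qpoch y q k * qpoch (x * t) q k / qpoch (y * t) q k) * x ^ (n - k)))"
proof -
  have adm: "Dxy_admissible q x y"
    using assms(5) by (simp add: Dxy_admissible_def)
  have "Eterm q (wPn q t n) x y sums E_wPn q t n x y"
  proof (cases "t = 0")
    case True
    then show ?thesis
      using sums_E_wPn_t_zero[OF assms(1,2) adm] by simp
  next
    case False
    then show ?thesis
      using sums_E_wPn_t_nonzero[OF assms(1,2) adm] assms(3,4,6) by blast
  qed
  then show ?thesis
    unfolding wPn_def E_wPn_def E_wPn_sum_def .
qed

end
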